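(* Assume the standing assumptions and let $\bar u\in V$ be a local solution of \[ \min_{u\in V}\ F(u)+\frac\alpha2\|u\|_V^2+\beta\int_\Omega|u|^p\,dx , \] i.e. there is $\rho>0$ such that the objective at $\bar u$ is not larger than at any $u$ with $\|u-\bar u\|_V\le\rho$. Then there exists $\bar\lambda\in V^*$ such that \[ \alpha\langle\bar u,v\rangle_V+\beta\langle\bar\lambda,v\rangle_{V^*,V}=-F'(\bar u)v\quad\forall v\in V, \qquad \langle\bar\lambda,\bar u\rangle_{V^*,V}=p\int_\Omega|\bar u|^p\,dx . \]
   Context: Standing assumptions: $\Omega\subset\mathbb R^d$ bounded Lipschitz domain; $V$ real Hilbert space with inner product $\langle\cdot,\cdot\rangle_V$, $V\subset L^2(\Omega)$ with compact and dense embedding; $V^*$ dual with pairing $\langle\cdot,\cdot\rangle_{V^*,V}$. $F:V\to\mathbb R$ weakly lower semicontinuous, bounded below by an affine function ($F(u)\ge\langle g,u\rangle_{V^*,V}+c$ for some $g\in V^*$, $c\in\mathbb R$), and continuously Fréchet differentiable with derivative $F'(u)\in V^*$. $\alpha>0$, $\beta>0$, $p\in(0,1)$. *)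

theory Defs
  imports "HOL-Analysis.Analysis"
begin

definition L2_fun :: "'a::euclidean_space set \<Rightarrow> ('a \<Rightarrow> real) \<Rightarrow> bool" where
  "L2_fun \<Omega> f \<longleftrightarrow> set_borel_measurable lebesgue \<Omega> f \<and>
     set_integrable lebesgue \<Omega> (\<lambda>x. (f x)^2)"

definition L2_dist :: "'a::euclidean_space set \<Rightarrow> ('a \<Rightarrow> real) \<Rightarrow> ('a \<Rightarrow> real) \<Rightarrow> real" where
  "L2_dist \<Omega> f g = sqrt (LINT x:\<Omega>|lebesgue. (f x - g x)^2)"

text \<open>Bounded Lipschitz domain: nonempty bounded open connected set whose boundary is
  locally the (strict) epigraph of a Lipschitz function over a hyperplane.\<close>
definition bounded_lipschitz_domain :: "'a::euclidean_space set \<Rightarrow> bool" where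
  "bounded_lipschitz_domain \<Omega> \<longleftrightarrow> open \<Omega> \<and> connected \<Omega> \<and> \<Omega> \<noteq> {} \<and> bounded \<Omega> \<and>
     (\<forall>x0\<in>frontier \<Omega>. \<exists>r>0. \<exists>\<nu>::'a. norm \<nu> = 1 \<and>
        (\<exists>L (g::'a \<Rightarrow> real). L-lipschitz_on {y. y \<bullet> \<nu> = 0} g \<and>
           \<Omega> \<inter> ball x0 r = {x \<in> ball x0 r. g (x - (x \<bullet> \<nu>) *\<^sub>R \<nu>) < x \<bullet> \<nu>}))"

text \<open>J realises V as a subspace of L2(Omega) with compact and dense embedding
  (linearity and injectivity up to null sets, continuity, compactness, density).\<close>
definition compact_dense_embedding ::
  "'a::euclidean_space set \<Rightarrow> ('v::real_normed_vector \<Rightarrow> 'a \<Rightarrow> real) \<Rightarrow> bool" where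
  "compact_dense_embedding \<Omega> J \<longleftrightarrow>
     (\<forall>u. L2_fun \<Omega> (J u)) \<and>
     (\<forall>u w. AE x in lebesgue. x \<in> \<Omega> \<longrightarrow> J (u + w) x = J u x + J w x) \<and>
     (\<forall>c u. AE x in lebesgue. x \<in> \<Omega> \<longrightarrow> J (c *\<^sub>R u) x = c * J u x) \<and>
     (\<forall>u. (AE x in lebesgue. x \<in> \<Omega> \<longrightarrow> J u x = 0) \<longrightarrow> u = 0) \<and>
     (\<exists>C. \<forall>u. L2_dist \<Omega> (J u) (\<lambda>_. 0) \<le> C * norm u) \<and>
     (\<forall>us::nat \<Rightarrow> 'v. bounded (range us) \<longrightarrow>
        (\<exists>r f. strict_mono r \<and> L2_fun \<Omega> f \<and> (\<lambda>n. L2_dist \<Omega> (J (us (r n))) f) \<longlonglongrightarrow> 0)) \<and>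
     (\<forall>f \<epsilon>. L2_fun \<Omega> f \<and> \<epsilon> > 0 \<longrightarrow> (\<exists>u. L2_dist \<Omega> (J u) f < \<epsilon>))"

definition weakly_lsc :: "('v::real_normed_vector \<Rightarrow> real) \<Rightarrow> bool" where
  "weakly_lsc F \<longleftrightarrow> (\<forall>u us. (\<forall>l::'v \<Rightarrow> real. bounded_linear l \<longrightarrow> (\<lambda>n. l (us n)) \<longlonglongrightarrow> l u) \<longrightarrow>
      ereal (F u) \<le> liminf (\<lambda>n. ereal (F (us n))))"

end

theory Submission
  imports Defs
begin

text \<open>The stationarity equation determines the multiplier, so the content of the theorem is the
  complementarity relation. It comes from restricting the objective to the ray
  \<open>t \<mapsto> t \<cdot> ubar\<close>: the nonconvex term becomes \<open>\<beta> t\<^sup>p \<integral>|ubar|\<^sup>p\<close>, which is differentiable at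
  \<open>t = 1\<close>, and the one-dimensional Fermat rule gives
  \<open>F'(ubar) ubar + \<alpha> \<parallel>ubar\<parallel>\<^sup>2 + \<beta> p \<integral>|ubar|\<^sup>p = 0\<close>.\<close>

lemma set_borel_measurable_abs_powr:
  fixes f :: "'a \<Rightarrow> real"
  assumes "set_borel_measurable M \<Omega> f"
  shows "set_borel_measurable M \<Omega> (\<lambda>x. \<bar>f x\<bar> powr p)"
proof -
  have "(\<lambda>x. \<bar>indicator \<Omega> x *\<^sub>R f x\<bar> powr p) \<in> borel_measurable M"
    using assms unfolding set_borel_measurable_def by (rule measurable_abs_powr)
  also have "(\<lambda>x. \<bar>indicator \<Omega> x *\<^sub>R f x\<bar> powr p) = (\<lambda>x. indicator \<Omega> x *\<^sub>R \<bar>f x\<bar> powr p)"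
    by (auto simp: indicator_def)
  finally show ?thesis
    unfolding set_borel_measurable_def .
qed

lemma set_integral_abs_powr_scale:
  fixes f g :: "'a \<Rightarrow> real"
  assumes f: "set_borel_measurable M \<Omega> f" and g: "set_borel_measurable M \<Omega> g"
    and f_eq: "AE x in M. x \<in> \<Omega> \<longrightarrow> f x = t * g x"
  shows "(LINT x:\<Omega>|M. \<bar>f x\<bar> powr p) = \<bar>t\<bar> powr p * (LINT x:\<Omega>|M. \<bar>g x\<bar> powr p)"
proof -
  have "(LINT x:\<Omega>|M. \<bar>f x\<bar> powr p) = (LINT x:\<Omega>|M. \<bar>t\<bar> powr p * \<bar>g x\<bar> powr p)"
    unfolding set_lebesgue_integral_def
  proof (rule integral_cong_AE)
    show "(\<lambda>x. indicator \<Omega> x *\<^sub>R \<bar>f x\<bar> powr p) \<in> borel_measurable M"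
      using set_borel_measurable_abs_powr[OF f] unfolding set_borel_measurable_def .
    show "(\<lambda>x. indicator \<Omega> x *\<^sub>R (\<bar>t\<bar> powr p * \<bar>g x\<bar> powr p)) \<in> borel_measurable M"
      using borel_measurable_times[OF borel_measurable_const set_borel_measurable_abs_powr[OF g,
          unfolded set_borel_measurable_def], of "\<bar>t\<bar> powr p" p]
      by (simp add: mult.left_commute)
    show "AE x in M. indicator \<Omega> x *\<^sub>R \<bar>f x\<bar> powr p = indicator \<Omega> x *\<^sub>R (\<bar>t\<bar> powr p * \<bar>g x\<bar> powr p)"
      using f_eq by eventually_elim (auto simp: indicator_def abs_mult powr_mult)
  qed
  also have "\<dots> = \<bar>t\<bar> powr p * (LINT x:\<Omega>|M. \<bar>g x\<bar> powr p)"
    by (rule set_integral_mult_right)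
  finally show ?thesis .
qed

lemma compact_dense_embedding_integral_abs_powr_scaleR:
  assumes "compact_dense_embedding \<Omega> J"
  shows "(LINT x:\<Omega>|lebesgue. \<bar>J (t *\<^sub>R u) x\<bar> powr p)
    = \<bar>t\<bar> powr p * (LINT x:\<Omega>|lebesgue. \<bar>J u x\<bar> powr p)"
proof (rule set_integral_abs_powr_scale)
  have "\<forall>w. L2_fun \<Omega> (J w)" and "\<forall>c w. AE x in lebesgue. x \<in> \<Omega> \<longrightarrow> J (c *\<^sub>R w) x = c * J w x"
    using assms unfolding compact_dense_embedding_def by simp_all
  then show "set_borel_measurable lebesgue \<Omega> (J (t *\<^sub>R u))"
    and "set_borel_measurable lebesgue \<Omega> (J u)"
    and "AE x in lebesgue. x \<in> \<Omega> \<longrightarrow> J (t *\<^sub>R u) x = t * J u x"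
    unfolding L2_fun_def by simp_all
qed

lemma has_real_derivative_along_ray:
  assumes "(F has_derivative blinfun_apply D) (at (t *\<^sub>R u))"
  shows "((\<lambda>s. F (s *\<^sub>R u)) has_real_derivative D u) (at t)"
proof -
  have "((\<lambda>s. s *\<^sub>R u) has_derivative (\<lambda>h. h *\<^sub>R u)) (at t)"
    by (auto intro!: derivative_eq_intros)
  from has_derivative_compose[OF this assms]
  have "((\<lambda>s. F (s *\<^sub>R u)) has_derivative (\<lambda>h. D (h *\<^sub>R u))) (at t)"
    by simp
  moreover have "(\<lambda>h. D (h *\<^sub>R u)) = (*) (D u)"
    by (simp add: fun_eq_iff blinfun.scaleR_right)
  ultimately show ?thesis
    unfolding has_field_derivative_def by simp
qed

lemma radial_derivative_eq_0_if_local_min: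
  fixes G :: "'v::real_normed_vector \<Rightarrow> real"
  assumes \<rho>: "\<rho> > 0" and min: "\<forall>w. norm (w - u) \<le> \<rho> \<longrightarrow> G u \<le> G w"
    and deriv: "(g has_real_derivative D) (at 1)" and g: "\<forall>t>0. g t = G (t *\<^sub>R u)"
  shows "D = 0"
proof (rule DERIV_local_min[OF deriv])
  define d where "d = min 1 (\<rho> / (norm u + 1))"
  show "d > 0"
    using \<rho> by (simp add: d_def add_nonneg_pos)
  show "\<forall>t. \<bar>1 - t\<bar> < d \<longrightarrow> g 1 \<le> g t"
  proof (intro allI impI)
    fix t assume t: "\<bar>1 - t\<bar> < d"
    have "norm (t *\<^sub>R u - u) = \<bar>1 - t\<bar> * norm u"
      by (metis abs_minus_commute norm_scaleR scaleR_diff_left scaleR_one)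
    also have "\<dots> \<le> \<rho> / (norm u + 1) * (norm u + 1)"
      using t by (intro mult_mono) (auto simp: d_def)
    also have "\<dots> = \<rho>"
      using norm_ge_zero[of u] by (simp del: norm_ge_zero)
    finally have "G u \<le> G (t *\<^sub>R u)"
      using min by blast
    moreover have "t > 0"
      using t by (auto simp: d_def abs_less_iff)
    ultimately show "g 1 \<le> g t"
      using g by simp
  qed
qed

lemma exists_blinfun_stationarity:
  fixes u :: "'v::real_inner" and L :: "'v \<Rightarrow>\<^sub>L real"
  assumes "\<beta> \<noteq> 0"
  shows "\<exists>lam::'v \<Rightarrow>\<^sub>L real. (\<forall>v. \<alpha> * inner u v + \<beta> * lam v = - L v)
    \<and> \<beta> * lam u = - L u - \<alpha> * (norm u)\<^sup>2"
proof -
  define lam where "lam = inverse \<beta> *\<^sub>R (- L - \<alpha> *\<^sub>R blinfun_inner_right u)"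
  have "\<beta> * lam v = - L v - \<alpha> * inner u v" for v
    using assms unfolding lam_def by (simp add: blinfun.scaleR_left blinfun.diff_left blinfun.minus_left)
  then show ?thesis
    by (intro exI[of _ lam]) (auto simp: power2_norm_eq_inner algebra_simps)
qed

theorem theorem5p6:
  fixes \<Omega> :: "'a::euclidean_space set"
    and J :: "'v::{real_inner, complete_space} \<Rightarrow> 'a \<Rightarrow> real"
    and F :: "'v \<Rightarrow> real"
    and F' :: "'v \<Rightarrow> ('v \<Rightarrow>\<^sub>L real)"
    and \<alpha> \<beta> p :: real
    and ubar :: 'v
  assumes dom: "bounded_lipschitz_domain \<Omega>"
    and emb: "compact_dense_embedding \<Omega> J"
    and F_wlsc: "weakly_lsc F"
    and F_below: "\<exists>g c. bounded_linear g \<and> (\<forall>u. F u \<ge> g u + c)"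
    and F_deriv: "\<forall>u. (F has_derivative blinfun_apply (F' u)) (at u)"
    and F'_cont: "continuous_on UNIV F'"
    and \<alpha>: "\<alpha> > 0" and \<beta>: "\<beta> > 0" and p: "0 < p" "p < 1"
    and loc: "\<exists>\<rho>>0. \<forall>u. norm (u - ubar) \<le> \<rho> \<longrightarrow>
        F ubar + \<alpha>/2 * (norm ubar)^2 + \<beta> * (LINT x:\<Omega>|lebesgue. \<bar>J ubar x\<bar> powr p)
        \<le> F u + \<alpha>/2 * (norm u)^2 + \<beta> * (LINT x:\<Omega>|lebesgue. \<bar>J u x\<bar> powr p)"
  shows "\<exists>lam::'v \<Rightarrow>\<^sub>L real.
           (\<forall>v. \<alpha> * inner ubar v + \<beta> * blinfun_apply lam v = - blinfun_apply (F' ubar) v) \<and>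
           blinfun_apply lam ubar = p * (LINT x:\<Omega>|lebesgue. \<bar>J ubar x\<bar> powr p)"
proof -
  define I where "I = (LINT x:\<Omega>|lebesgue. \<bar>J ubar x\<bar> powr p)"
  define G where "G u = F u + \<alpha>/2 * (norm u)^2 + \<beta> * (LINT x:\<Omega>|lebesgue. \<bar>J u x\<bar> powr p)" for u
  define g where "g t = F (t *\<^sub>R ubar) + \<alpha>/2 * t\<^sup>2 * (norm ubar)^2 + \<beta> * (t powr p * I)" for t
  obtain \<rho> where \<rho>: "\<rho> > 0" "\<forall>u. norm (u - ubar) \<le> \<rho> \<longrightarrow> G ubar \<le> G u"
    using loc unfolding G_def by blast
  have "g t = G (t *\<^sub>R ubar)" if "t > 0" for t
    using that unfolding g_def G_def I_def
    by (simp add: compact_dense_embedding_integral_abs_powr_scaleR[OF emb] power_mult_distrib)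
  moreover have "(g has_real_derivative F' ubar ubar + \<alpha> * (norm ubar)^2 + \<beta> * (p * I)) (at 1)"
    unfolding g_def using F_deriv
    by (auto intro!: derivative_eq_intros has_real_derivative_along_ray)
  ultimately have radial: "F' ubar ubar + \<alpha> * (norm ubar)^2 + \<beta> * (p * I) = 0"
    using radial_derivative_eq_0_if_local_min[OF \<rho>] by blast
  obtain lam :: "'v \<Rightarrow>\<^sub>L real" where
    "\<forall>v. \<alpha> * inner ubar v + \<beta> * lam v = - F' ubar v" and
    "\<beta> * lam ubar = - F' ubar ubar - \<alpha> * (norm ubar)\<^sup>2"
    using exists_blinfun_stationarity[of \<beta>] \<beta> by blast
  moreover from this(2) radial have "\<beta> * lam ubar = \<beta> * (p * I)"
    by linarith
  then have "lam ubar = p * I"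
    using \<beta> by simp
  ultimately show ?thesis
    unfolding I_def by blast
qed

end
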